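(* A topological space $X$ is dense-pseudocompact if and only if every open subspace of $X$ is dense-pseudocompact.
   Context: A space is pseudocompact if every continuous real-valued function on it is bounded. A space $X$ is dense-pseudocompact if every dense subset of $X$ (with the subspace topology) is pseudocompact. *)

theory Defs
  imports "HOL-Analysis.Analysis"
begin

definition pseudocompact_space :: "'a topology \<Rightarrow> bool" where
  "pseudocompact_space X \<longleftrightarrow>
     (\<forall>f. continuous_map X euclideanreal f \<longrightarrow> bounded (f ` topspace X))"

definition dense_pseudocompact :: "'a topology \<Rightarrow> bool" where
  "dense_pseudocompact X \<longleftrightarrow>
     (\<forall>D. D \<subseteq> topspace X \<and> X closure_of D = topspace X
          \<longrightarrow> pseudocompact_space (subtopology X D))"

end

theory Submission
  imports Defs
begin

text \<open>Let \<open>U\<close> be open in \<open>X\<close> and \<open>D\<close> dense in \<open>U\<close>. Adding to \<open>D\<close> the exterior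
  \<open>X - cl U\<close> of \<open>U\<close> gives a set \<open>D'\<close> dense in \<open>X\<close>, hence pseudocompact, and \<open>D = D' \<inter> cl U\<close>
  is clopen in \<open>D'\<close>. A real function on a clopen piece extends by \<open>0\<close> to a continuous function
  on the whole space, so clopen subspaces of pseudocompact spaces are pseudocompact.
  The converse direction is the case \<open>U = X\<close>.\<close>

lemma pseudocompact_space_clopen_subtopology:
  assumes pc: "pseudocompact_space X" and "closedin X S" "openin X S"
  shows "pseudocompact_space (subtopology X S)"
  unfolding pseudocompact_space_def
proof (intro allI impI)
  fix f :: "'a \<Rightarrow> real"
  assume f: "continuous_map (subtopology X S) euclideanreal f"
  have S: "S \<subseteq> topspace X"
    using \<open>openin X S\<close> by (rule openin_subset)
  have "continuous_map X euclideanreal (\<lambda>x. if x \<in> S then f x else 0)"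
  proof (rule continuous_map_cases)
    show "continuous_map (subtopology X (X closure_of {x. x \<in> S})) euclideanreal f"
      using f \<open>closedin X S\<close> by (simp add: closure_of_closedin)
    show "continuous_map (subtopology X (X closure_of {x. x \<notin> S})) euclideanreal (\<lambda>x. 0)"
      by simp
    show "f x = 0" if "x \<in> X frontier_of {x. x \<in> S}" for x
      using that S assms(2,3) frontier_of_eq_empty by fastforce
  qed
  then have "bounded ((\<lambda>x. if x \<in> S then f x else 0) ` topspace X)"
    using pc unfolding pseudocompact_space_def by blast
  moreover have "f ` topspace (subtopology X S) \<subseteq> (\<lambda>x. if x \<in> S then f x else 0) ` topspace X"
    by (auto intro!: image_eqI)
  ultimately show "bounded (f ` topspace (subtopology X S))"
    using bounded_subset by blast
qed

lemma closure_of_Un_exterior_eq_topspace: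
  assumes "D \<subseteq> topspace X" "U \<subseteq> X closure_of D"
  shows "X closure_of (D \<union> (topspace X - X closure_of U)) = topspace X"
proof -
  let ?D' = "D \<union> (topspace X - X closure_of U)"
  have "X closure_of U \<subseteq> X closure_of D"
    using closure_of_mono[OF assms(2), of X] by simp
  also have "\<dots> \<subseteq> X closure_of ?D'"
    by (rule closure_of_mono) blast
  finally have "topspace X \<subseteq> X closure_of ?D'"
    using closure_of_subset[of ?D' X] assms(1) by blast
  then show ?thesis
    by (simp add: closure_of_subset_topspace subset_antisym)
qed

lemma dense_pseudocompact_open_subtopology:
  assumes dp: "dense_pseudocompact X" and U: "openin X U"
  shows "dense_pseudocompact (subtopology X U)"
  unfolding dense_pseudocompact_def
proof (intro allI impI, elim conjE)
  fix D
  assume "D \<subseteq> topspace (subtopology X U)"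
    and dense: "subtopology X U closure_of D = topspace (subtopology X U)"
  then have DU: "D \<subseteq> U" and UX: "U \<subseteq> topspace X"
    using openin_subset[OF U] by auto
  have "U \<subseteq> X closure_of D"
    using dense UX DU by (simp add: closure_of_subtopology Int_absorb1 Int_absorb2) blast
  define D' where "D' = D \<union> (topspace X - X closure_of U)"
  have D'X: "D' \<subseteq> topspace X"
    unfolding D'_def using DU UX by auto
  have D_eq: "D = D' \<inter> X closure_of U" "D = D' \<inter> U"
    unfolding D'_def using DU closure_of_subset[OF UX] by auto
  have "pseudocompact_space (subtopology X D')"
    using dp D'X closure_of_Un_exterior_eq_topspace[OF _ \<open>U \<subseteq> X closure_of D\<close>] DU UX
    unfolding dense_pseudocompact_def D'_def by blast
  moreover have "closedin (subtopology X D') D"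
    using D_eq(1) by (metis closedin_closure_of closedin_subtopology_Int_closed)
  moreover have "openin (subtopology X D') D"
    using U D_eq(2) by (auto simp: openin_subtopology Int_commute)
  ultimately have "pseudocompact_space (subtopology (subtopology X D') D)"
    by (rule pseudocompact_space_clopen_subtopology)
  moreover have "subtopology (subtopology X D') D = subtopology (subtopology X U) D"
    using DU D_eq(2) by (simp add: subtopology_subtopology Int_absorb1)
  ultimately show "pseudocompact_space (subtopology (subtopology X U) D)"
    by simp
qed

theorem lemma3p2:
  fixes X :: "'a topology"
  shows "dense_pseudocompact X \<longleftrightarrow>
           (\<forall>U. openin X U \<longrightarrow> dense_pseudocompact (subtopology X U))"
proof
  assume "dense_pseudocompact X"
  then show "\<forall>U. openin X U \<longrightarrow> dense_pseudocompact (subtopology X U)"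
    using dense_pseudocompact_open_subtopology by blast
next
  assume "\<forall>U. openin X U \<longrightarrow> dense_pseudocompact (subtopology X U)"
  then have "dense_pseudocompact (subtopology X (topspace X))"
    by blast
  then show "dense_pseudocompact X"
    by simp
qed

end
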